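(* Let $\Gamma$ be a simple closed curve in $S^2_\infty(\mathbf{H}^3)$ and let $\Sigma$ be an embedded least area plane in $\mathbf{H}^3$ with $\partial_\infty\Sigma=\Gamma$. Fix a point $0\in\Sigma$ and for $r>0$ let $B_r(0)$ be the closed (extrinsic) hyperbolic ball of radius $r$ centered at $0$. If $\Sigma$ is not proper, then there exists $r_0>0$ such that for every generic $r>r_0$, the intersection $B_r(0)\cap\Sigma$ contains infinitely many pairwise disjoint disks.
   Context: A least area disk is a disk of smallest area among all disks with the same boundary; a least area plane is a plane every compact subdisk of which is a least area disk. $\Sigma$ is proper if the preimage of every compact subset of $\mathbf{H}^3$ under the embedding is compact. $\partial_\infty\Sigma$ is the set of limit points of $\Sigma$ in the sphere at infinity $S^2_\infty(\mathbf{H}^3)$. A radius $r>0$ is called generic if $B_r(0)\cap\Sigma$ is a disjoint union of (closed) disks; this holds for almost every $r>0$. *)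

theory Defs
  imports "HOL-Analysis.Analysis"
begin

text \<open>Hyperbolic 3-space in the Poincare ball model: the open unit ball of real^3.\<close>

definition H3 :: "(real^3) set" where
  "H3 = ball 0 1"

definition hdist :: "real^3 \<Rightarrow> real^3 \<Rightarrow> real" where
  "hdist x y = arcosh (1 + 2 * (norm (x - y))\<^sup>2 / ((1 - (norm x)\<^sup>2) * (1 - (norm y)\<^sup>2)))"

definition S2inf :: "(real^3) set" where
  "S2inf = sphere 0 1"

definition hball :: "real^3 \<Rightarrow> real \<Rightarrow> (real^3) set" where
  "hball p r = {x \<in> H3. hdist p x \<le> r}"

definition hdiam :: "(real^3) set \<Rightarrow> ennreal" where
  "hdiam C = (SUP x\<in>C. SUP y\<in>C. ennreal (hdist x y))"

text \<open>Two-dimensional Hausdorff measure with respect to the hyperbolic metric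
  (normalised so that it agrees with area: factor pi/4).\<close>
definition hausdorff2_pre :: "real \<Rightarrow> (real^3) set \<Rightarrow> ennreal" where
  "hausdorff2_pre \<delta> A =
     (INF c\<in>{c :: nat \<Rightarrow> (real^3) set. A \<subseteq> (\<Union>i. c i) \<and> (\<forall>i. c i \<subseteq> H3 \<and> hdiam (c i) \<le> ennreal \<delta>)}.
        (\<Sum>i. (hdiam (c i))\<^sup>2))"

definition harea :: "(real^3) set \<Rightarrow> ennreal" where
  "harea A = ennreal (pi / 4) * (SUP \<delta>\<in>{0<..}. hausdorff2_pre \<delta> A)"

definition disk_with_boundary :: "(real^3) set \<Rightarrow> (real^3) set \<Rightarrow> bool" where
  "disk_with_boundary D C \<longleftrightarrow> D \<subseteq> H3 \<and>
     (\<exists>h k. homeomorphism (cball (0::real^2) 1) D h k \<and> C = h ` sphere 0 1)"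

definition is_disk :: "(real^3) set \<Rightarrow> bool" where
  "is_disk D \<longleftrightarrow> (\<exists>C. disk_with_boundary D C)"

definition least_area_disk :: "(real^3) set \<Rightarrow> bool" where
  "least_area_disk D \<longleftrightarrow> (\<exists>C. disk_with_boundary D C \<and>
     (\<forall>D'. disk_with_boundary D' C \<longrightarrow> harea D \<le> harea D'))"

definition embedded_plane :: "(real^2 \<Rightarrow> real^3) \<Rightarrow> bool" where
  "embedded_plane \<phi> \<longleftrightarrow> range \<phi> \<subseteq> H3 \<and> (\<exists>\<psi>. homeomorphism UNIV (range \<phi>) \<phi> \<psi>)"

definition least_area_plane :: "(real^2 \<Rightarrow> real^3) \<Rightarrow> bool" where
  "least_area_plane \<phi> \<longleftrightarrow> embedded_plane \<phi> \<and>
     (\<forall>D. D \<subseteq> range \<phi> \<and> is_disk D \<longrightarrow> least_area_disk D)"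

definition proper_embedding :: "(real^2 \<Rightarrow> real^3) \<Rightarrow> bool" where
  "proper_embedding \<phi> \<longleftrightarrow> (\<forall>K. compact K \<and> K \<subseteq> H3 \<longrightarrow> compact (\<phi> -` K))"

definition asymptotic_boundary :: "(real^3) set \<Rightarrow> (real^3) set" where
  "asymptotic_boundary S = S2inf \<inter> closure S"

definition simple_closed_curve_at_infinity :: "(real^3) set \<Rightarrow> bool" where
  "simple_closed_curve_at_infinity \<Gamma> \<longleftrightarrow> \<Gamma> \<subseteq> S2inf \<and> \<Gamma> homeomorphic sphere (0::real^2) 1"

text \<open>r is generic: B_r(p) \<inter> \<Sigma> is a disjoint union of closed disks, i.e. each
  connected component is a disk.\<close>
definition generic_radius :: "real^3 \<Rightarrow> (real^3) set \<Rightarrow> real \<Rightarrow> bool" where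
  "generic_radius p S r \<longleftrightarrow> (\<forall>D\<in>components (hball p r \<inter> S). is_disk D)"

end

theory Submission
  imports Defs
begin

text \<open>A compact set \<open>K \<subseteq> H3\<close> whose preimage under \<open>\<phi>\<close> is not compact lies in some
  ball \<open>B\<^sub>r\<^sub>0(p)\<close>. For \<open>r > r\<^sub>0\<close>, if \<open>B\<^sub>r(p) \<inter> \<Sigma>\<close> had only finitely many components, all
  of them disks, it would be compact; pulling it back along the embedding would make the
  closed set \<open>\<phi>\<^sup>-\<^sup>1(K)\<close> a subset of a compact set. For a generic radius every component is a
  disk, so there are infinitely many.\<close>

lemma continuous_on_hdist:
  assumes "p \<in> H3"
  shows "continuous_on H3 (hdist p)"
proof -
  have norm_sq_lt: "(norm x)\<^sup>2 < 1" if "x \<in> H3" for x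
    using that by (simp add: H3_def abs_square_less_1)
  let ?cosh = "\<lambda>x. 1 + 2 * (norm (p - x))\<^sup>2 / ((1 - (norm p)\<^sup>2) * (1 - (norm x)\<^sup>2))"
  have "continuous_on H3 ?cosh"
    by (intro continuous_intros) (use norm_sq_lt assms in fastforce)+
  moreover have "?cosh ` H3 \<subseteq> {1..}"
    using norm_sq_lt [OF assms] norm_sq_lt by (auto intro!: divide_nonneg_pos)
  ultimately have "continuous_on H3 (\<lambda>x. arcosh (?cosh x))"
    by (rule continuous_on_compose2 [OF continuous_on_arcosh [OF order.refl]])
  then show ?thesis
    by (simp add: hdist_def [abs_def])
qed

lemma compact_subset_hball:
  assumes "p \<in> H3" "compact K" "K \<subseteq> H3"
  obtains r where "r > 0" "K \<subseteq> hball p r"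
proof -
  have "bounded (hdist p ` K)"
    using assms by (intro compact_imp_bounded compact_continuous_image continuous_on_subset [OF continuous_on_hdist])
  then obtain B where "\<forall>y \<in> hdist p ` K. norm y \<le> B"
    unfolding bounded_iff by blast
  then have "K \<subseteq> hball p (max 1 B)"
    using assms(3) by (force simp: hball_def)
  then show thesis
    by (rule that [rotated]) simp
qed

lemma hball_mono: "r \<le> s \<Longrightarrow> hball p r \<subseteq> hball p s"
  by (auto simp: hball_def)

lemma compact_if_is_disk: "is_disk D \<Longrightarrow> compact D"
  unfolding is_disk_def disk_with_boundary_def homeomorphism_def
  by (metis compact_cball compact_continuous_image)

lemma compact_if_finite_compact_components:
  assumes "finite (components S)" "\<And>C. C \<in> components S \<Longrightarrow> compact C"
  shows "compact S"
  using compact_Union [OF assms] by (simp only: Union_components)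

lemma compact_vimage_homeomorphism:
  assumes "homeomorphism S T f g" "compact C" "C \<subseteq> T"
  shows "compact (S \<inter> f -` C)"
proof -
  have "S \<inter> f -` C = g ` C"
    using assms(1,3) unfolding homeomorphism_def by force
  moreover have "compact (g ` C)"
    using assms by (meson compact_continuous_image continuous_on_subset homeomorphism_cont2)
  ultimately show ?thesis by simp
qed

lemma noncompact_hball_sections_if_not_proper:
  assumes "embedded_plane \<phi>" "p \<in> H3" "\<not> proper_embedding \<phi>"
  obtains r0 where "r0 > 0" "\<And>r. r > r0 \<Longrightarrow> \<not> compact (hball p r \<inter> range \<phi>)"
proof -
  obtain \<psi> where hom: "homeomorphism UNIV (range \<phi>) \<phi> \<psi>"
    using assms(1) by (auto simp: embedded_plane_def)
  obtain K where K: "compact K" "K \<subseteq> H3" "\<not> compact (\<phi> -` K)"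
    using assms(3) by (auto simp: proper_embedding_def)
  obtain r0 where "r0 > 0" and K_r0: "K \<subseteq> hball p r0"
    using compact_subset_hball [OF assms(2) K(1,2)] .
  have "\<not> compact (hball p r \<inter> range \<phi>)" if "r > r0" for r
  proof
    assume "compact (hball p r \<inter> range \<phi>)"
    then have "compact (\<phi> -` (hball p r \<inter> range \<phi>))"
      using compact_vimage_homeomorphism [OF hom] by (metis Int_lower2 UNIV_I Int_absorb1 subsetI)
    moreover have "closed (\<phi> -` K)"
      using compact_imp_closed [OF K(1)] homeomorphism_cont1 [OF hom]
      by (simp add: closed_vimage continuous_on_eq_continuous_within)
    ultimately have "compact (\<phi> -` (hball p r \<inter> range \<phi>) \<inter> \<phi> -` K)"
      by (rule compact_Int_closed)
    moreover have "\<phi> -` K \<subseteq> \<phi> -` (hball p r \<inter> range \<phi>)"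
      using K_r0 hball_mono [of r0 r p] that by auto
    ultimately show False
      using K(3) by (simp add: Int_absorb1)
  qed
  with \<open>r0 > 0\<close> show thesis by (rule that)
qed

theorem lemma3p1:
  fixes \<Gamma> :: "(real^3) set" and \<phi> :: "real^2 \<Rightarrow> real^3" and p :: "real^3"
  assumes "simple_closed_curve_at_infinity \<Gamma>"
    and "least_area_plane \<phi>"
    and "asymptotic_boundary (range \<phi>) = \<Gamma>"
    and "p \<in> range \<phi>"
    and "\<not> proper_embedding \<phi>"
  shows "\<exists>r0>0. \<forall>r>r0. generic_radius p (range \<phi>) r \<longrightarrow>
           infinite {D \<in> components (hball p r \<inter> range \<phi>). is_disk D}"
proof -
  have plane: "embedded_plane \<phi>"
    using assms(2) by (simp add: least_area_plane_def)
  then have "p \<in> H3"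
    using assms(4) by (auto simp: embedded_plane_def)
  then obtain r0 where "r0 > 0" and noncompact: "\<And>r. r > r0 \<Longrightarrow> \<not> compact (hball p r \<inter> range \<phi>)"
    using noncompact_hball_sections_if_not_proper [OF plane _ assms(5)] by blast
  have "infinite {D \<in> components (hball p r \<inter> range \<phi>). is_disk D}"
    if "r > r0" and generic: "generic_radius p (range \<phi>) r" for r
  proof -
    have disks: "\<And>D. D \<in> components (hball p r \<inter> range \<phi>) \<Longrightarrow> is_disk D"
      using generic by (simp add: generic_radius_def)
    then have "{D \<in> components (hball p r \<inter> range \<phi>). is_disk D} = components (hball p r \<inter> range \<phi>)"
      by blast
    then show ?thesis
      using noncompact [OF \<open>r > r0\<close>] disks compact_if_is_disk compact_if_finite_compact_components
      by metis
  qed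
  with \<open>r0 > 0\<close> show ?thesis by blast
qed

end
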